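(* Let $V=\{\mathbf{v}_1,\ldots,\mathbf{v}_n\}$ be positively spanning vectors in $\mathbb{R}^d$ and let $\{(\mathbf{u}^{(i)},y^{(i)})\}_{i=1}^m\subset\mathbb{R}^d\times\mathbb{R}$ be a data set. Then the least-squares problem \[ \operatorname{argmin}_{\mathbf{h}\in\overline{\mathrm{IR}}(V)}\frac1m\sum_{i=1}^m\left(h_{P(\mathbf{h})}(\mathbf{u}^{(i)})-y^{(i)}\right)^2 \] is a piecewise quadratic program, i.e. the objective function is piecewise quadratic on $\overline{\mathrm{IR}}(V)$: $\overline{\mathrm{IR}}(V)$ is the union of the finitely many polyhedral cones $\mathcal{P}(\Delta)$, $\Delta$ ranging over simplicial polytopal fans with ray generators $V$, and on each of them the objective is a quadratic function of $\mathbf{h}$.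
   Context: $h_P(\mathbf{u})=\max_{\mathbf{x}\in P}\langle\mathbf{x},\mathbf{u}\rangle$. For $\mathbf{h}\in\mathbb{R}^n$, $P(\mathbf{h})=\{\mathbf{x}\in\mathbb{R}^d\colon\langle\mathbf{x},\mathbf{v}_i\rangle\le h_i\ \forall i\}$. A vector $\mathbf{h}$ is irredundant if $P(\mathbf{h})$ is non-empty and removing any of the $n$ inequalities changes $P(\mathbf{h})$; $\overline{\mathrm{IR}}(V)$ denotes the closure of the set of irredundant vectors; for $\mathbf{h}\in\overline{\mathrm{IR}}(V)$ one has $h_i=h_{P(\mathbf{h})}(\mathbf{v}_i)$, so $\overline{\mathrm{IR}}(V)$ parametrizes the polytopes with facet directions in $V$. For a simplicial polytopal fan $\Delta$ (normal fan of a polytope, all cones generated by linearly independent vectors) with ray generators $V$, the deformation cone $\mathcal{P}(\Delta)\subseteq\mathbb{R}^n$ is the set of support vectors $(h_P(\mathbf{v}_i))_i$ of polytopes $P$ whose normal fan is coarsened by $\Delta$; it is a closed polyhedral cone. *)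

theory Defs
  imports "HOL-Analysis.Analysis"
begin

definition poshull :: "'a::real_vector set \<Rightarrow> 'a set" where
  "poshull S = {(\<Sum>x\<in>T. c x *\<^sub>R x) | T c. finite T \<and> T \<subseteq> S \<and> (\<forall>x\<in>T. 0 \<le> c x)}"

definition positively_spanning :: "('n \<Rightarrow> 'a::real_vector) \<Rightarrow> bool" where
  "positively_spanning v \<longleftrightarrow> poshull (range v) = UNIV"

definition support_fun :: "'a::euclidean_space set \<Rightarrow> 'a \<Rightarrow> real" where
  "support_fun P u = Sup ((\<lambda>x. x \<bullet> u) ` P)"

definition Ph :: "('n::finite \<Rightarrow> 'a::euclidean_space) \<Rightarrow> real^'n \<Rightarrow> 'a set" where
  "Ph v h = {x. \<forall>i. x \<bullet> v i \<le> h $ i}"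

definition irredundant :: "('n::finite \<Rightarrow> 'a::euclidean_space) \<Rightarrow> real^'n \<Rightarrow> bool" where
  "irredundant v h \<longleftrightarrow> Ph v h \<noteq> {} \<and>
     (\<forall>i. {x. \<forall>j. j \<noteq> i \<longrightarrow> x \<bullet> v j \<le> h $ j} \<noteq> Ph v h)"

definition IRbar :: "('n::finite \<Rightarrow> 'a::euclidean_space) \<Rightarrow> (real^'n) set" where
  "IRbar v = closure {h. irredundant v h}"

definition normal_cone :: "'a::euclidean_space set \<Rightarrow> 'a set \<Rightarrow> 'a set" where
  "normal_cone P F = {u. \<forall>x\<in>F. \<forall>y\<in>P. y \<bullet> u \<le> x \<bullet> u}"

definition normal_fan :: "'a::euclidean_space set \<Rightarrow> 'a set set" where
  "normal_fan P = {normal_cone P F | F. F face_of P \<and> F \<noteq> {}}"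

definition refines :: "'a set set \<Rightarrow> 'a set set \<Rightarrow> bool" where
  "refines Delta N \<longleftrightarrow> (\<forall>C\<in>Delta. \<exists>D\<in>N. C \<subseteq> D)"

definition simplicial_polytopal_fan ::
    "('n::finite \<Rightarrow> 'a::euclidean_space) \<Rightarrow> 'a set set \<Rightarrow> bool" where
  "simplicial_polytopal_fan v Delta \<longleftrightarrow>
     (\<exists>Q. polytope Q \<and> normal_fan Q = Delta) \<and>
     (\<forall>C\<in>Delta. \<exists>S. C = poshull (v ` S) \<and> inj_on v S \<and> independent (v ` S)) \<and>
     bij_betw (\<lambda>i. poshull {v i}) UNIV {C\<in>Delta. dim C = 1}"

definition deformation_cone ::
    "('n::finite \<Rightarrow> 'a::euclidean_space) \<Rightarrow> 'a set set \<Rightarrow> (real^'n) set" where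
  "deformation_cone v Delta =
     {h. \<exists>P. polytope P \<and> P \<noteq> {} \<and> refines Delta (normal_fan P) \<and>
            (\<forall>i. h $ i = support_fun P (v i))}"

definition quadratic_fun :: "(real^'n::finite \<Rightarrow> real) \<Rightarrow> bool" where
  "quadratic_fun q \<longleftrightarrow> (\<exists>A b c. \<forall>h.
     q h = (\<Sum>i\<in>UNIV. \<Sum>j\<in>UNIV. A i j * h $ i * h $ j) + (\<Sum>i\<in>UNIV. b i * h $ i) + c)"

definition ls_objective ::
    "('n::finite \<Rightarrow> 'a::euclidean_space) \<Rightarrow> nat \<Rightarrow> (nat \<Rightarrow> 'a) \<Rightarrow> (nat \<Rightarrow> real)
      \<Rightarrow> real^'n \<Rightarrow> real" where
  "ls_objective v m u y h = (1 / real m) * (\<Sum>k<m. (support_fun (Ph v h) (u k) - y k)^2)"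

end

theory Submission
  imports Defs
begin

(*
  The deformation cone of a simplicial polytopal fan Delta = N(Q) is cut out by linear
  inequalities.  At a vertex z of Q the normal cone is generated by a basis
  {v s | s \<in> S z}, so every h determines a unique point x_z(h) with <x_z(h), v s> = h_s,
  depending linearly on h; and h lies in the deformation cone iff every x_z(h) lies in P(h).
  These are finitely many linear inequalities in h, so the deformation cone is a polyhedral
  cone, and on it h_P(h)(u) = <x_z(h), u> for u in the normal cone at z: every residual of
  the least-squares problem is affine in h, and the objective is quadratic.

  Each vector g of a deformation cone is a limit of irredundant vectors g + e h_Q, since Q
  has all n facets.  Conversely, an irredundant h is first pushed outwards, so that every
  inequality defines a facet through a point strictly inside the other half-spaces, and then
  perturbed generically, so that P(h') is simple; the normal fan of P(h') is then simplicial
  with rays v i, and h' lies in its deformation cone.  There are only finitely many such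
  fans, so the union of their deformation cones is closed and contains IRbar v.
*)

section \<open>Positive hulls, support functions and the polytopes \<open>P(h)\<close>\<close>

lemma poshullI:
  assumes "finite T" "T \<subseteq> A" "\<And>x. x \<in> T \<Longrightarrow> 0 \<le> c x"
  shows "(\<Sum>x\<in>T. c x *\<^sub>R x) \<in> poshull A"
  unfolding poshull_def using assms by blast

lemma poshullE:
  assumes "p \<in> poshull A"
  obtains c T where "p = (\<Sum>x\<in>T. c x *\<^sub>R x)" "finite T" "T \<subseteq> A" "\<And>x. x \<in> T \<Longrightarrow> 0 \<le> c x"
  using assms unfolding poshull_def by blast

lemma poshull_superset: "A \<subseteq> poshull A"
proof
  fix a assume "a \<in> A"
  then show "a \<in> poshull A"
    using poshullI[of "{a}" A "\<lambda>_. 1"] by simp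
qed

lemma poshull_subset_span: "poshull A \<subseteq> span A"
proof
  fix p assume "p \<in> poshull A"
  then obtain T c where "p = (\<Sum>x\<in>T. c x *\<^sub>R x)" "T \<subseteq> A"
    by (blast elim: poshullE)
  then show "p \<in> span A" by (auto intro!: span_sum span_scale intro: span_base)
qed

lemma dim_poshull: "dim (poshull A) = dim A"
  by (metis dim_span poshull_subset_span poshull_superset span_mono span_span subset_antisym)

lemma poshull_singleton: "poshull {a} = {c *\<^sub>R a | c. 0 \<le> c}"
proof (intro subset_antisym subsetI)
  fix p assume "p \<in> poshull {a}"
  then obtain T c where p: "p = (\<Sum>x\<in>T. c x *\<^sub>R x)" "T \<subseteq> {a}" "\<And>x. x \<in> T \<Longrightarrow> 0 \<le> c x"
    by (blast elim: poshullE)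
  from p(2) consider "T = {}" | "T = {a}" by blast
  then show "p \<in> {c *\<^sub>R a | c. 0 \<le> c}"
    by cases (use p in \<open>auto intro: exI[of _ 0]\<close>)
next
  fix p assume "p \<in> {c *\<^sub>R a | c. 0 \<le> c}"
  then obtain c where "p = c *\<^sub>R a" "0 \<le> c" by blast
  then show "p \<in> poshull {a}"
    using poshullI[of "{a}" "{a}" "\<lambda>_. c"] by simp
qed

lemma poshull_singleton_scaleR:
  assumes "0 < c"
  shows "poshull {c *\<^sub>R a} = poshull {a}"
  unfolding poshull_singleton
proof safe
  fix d :: real assume "0 \<le> d"
  then show "\<exists>e. d *\<^sub>R c *\<^sub>R a = e *\<^sub>R a \<and> 0 \<le> e"
    using assms by (intro exI[of _ "d * c"]) simp
  show "\<exists>e. d *\<^sub>R a = e *\<^sub>R c *\<^sub>R a \<and> 0 \<le> e"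
    using assms \<open>0 \<le> d\<close> by (intro exI[of _ "d / c"]) simp
qed

lemma poshull_inner_le:
  fixes A :: "'a::real_inner set"
  assumes "p \<in> poshull A" "\<And>w. w \<in> A \<Longrightarrow> y \<bullet> w \<le> x \<bullet> w"
  shows "y \<bullet> p \<le> x \<bullet> p"
proof -
  obtain T c where p: "p = (\<Sum>w\<in>T. c w *\<^sub>R w)" "T \<subseteq> A" "\<And>w. w \<in> T \<Longrightarrow> 0 \<le> c w"
    using assms(1) by (blast elim: poshullE)
  have "y \<bullet> p = (\<Sum>w\<in>T. c w * (y \<bullet> w))" by (simp add: p inner_sum_right)
  also have "\<dots> \<le> (\<Sum>w\<in>T. c w * (x \<bullet> w))"
    using p assms(2) by (intro sum_mono mult_left_mono) auto
  also have "\<dots> = x \<bullet> p" by (simp add: p inner_sum_right)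
  finally show ?thesis .
qed

lemma nonneg_combination_tight:
  fixes x z :: "'a::real_inner"
  assumes "finite T" "\<And>w. w \<in> T \<Longrightarrow> 0 \<le> c w" "\<And>w. w \<in> T \<Longrightarrow> x \<bullet> w \<le> z \<bullet> w"
    and "x \<bullet> (\<Sum>w\<in>T. c w *\<^sub>R w) = z \<bullet> (\<Sum>w\<in>T. c w *\<^sub>R w)"
    and "w \<in> T" "c w \<noteq> 0"
  shows "x \<bullet> w = z \<bullet> w"
proof -
  have "(\<Sum>w\<in>T. c w * (z \<bullet> w - x \<bullet> w)) = 0"
    using assms(4) by (simp add: inner_sum_left inner_sum_right right_diff_distrib sum_subtractf inner_commute)
  then have "\<forall>w\<in>T. c w * (z \<bullet> w - x \<bullet> w) = 0"
    using assms(1-3) by (subst (asm) sum_nonneg_eq_0_iff) auto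
  then show ?thesis using assms(5,6) by force
qed

lemma support_fun_eqI:
  assumes "x \<in> P" "\<And>y. y \<in> P \<Longrightarrow> y \<bullet> u \<le> x \<bullet> u"
  shows "support_fun P u = x \<bullet> u"
  unfolding support_fun_def by (rule cSup_eq_maximum) (use assms in auto)

lemma inner_le_support_fun:
  assumes "bounded P" "y \<in> P"
  shows "y \<bullet> u \<le> support_fun P u"
proof -
  have "bounded ((\<lambda>x. x \<bullet> u) ` P)"
    using assms(1) bounded_linear_inner_left by (rule bounded_linear_image)
  then show ?thesis
    unfolding support_fun_def using assms(2) by (auto intro: cSup_upper bounded_imp_bdd_above)
qed

lemma mem_Ph [simp]: "x \<in> Ph v h \<longleftrightarrow> (\<forall>i. x \<bullet> v i \<le> h $ i)"
  by (simp add: Ph_def)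

lemma polyhedron_Ph: "polyhedron (Ph v h)"
proof -
  have "Ph v h = (\<Inter>i. {x. v i \<bullet> x \<le> h $ i})"
    by (auto simp: inner_commute)
  then show ?thesis by (auto intro!: polyhedron_Inter polyhedron_halfspace_le)
qed

lemma convex_Ph: "convex (Ph v h)"
  by (rule polyhedron_imp_convex[OF polyhedron_Ph])

lemma Ph_inner_bounded_above:
  assumes "p \<in> poshull (range v)"
  obtains M where "\<And>x. x \<in> Ph v h \<Longrightarrow> x \<bullet> p \<le> M"
proof -
  obtain T c where p: "p = (\<Sum>w\<in>T. c w *\<^sub>R w)" "T \<subseteq> range v" "\<And>w. w \<in> T \<Longrightarrow> 0 \<le> c w"
    using assms by (blast elim: poshullE)
  have "x \<bullet> p \<le> (\<Sum>w\<in>T. c w * h $ inv v w)" if "x \<in> Ph v h" for x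
  proof -
    have "x \<bullet> w \<le> h $ inv v w" if "w \<in> T" for w
      using \<open>x \<in> Ph v h\<close> f_inv_into_f[of w v UNIV] p(2) that by (metis mem_Ph subsetD)
    then show ?thesis
      unfolding p(1) inner_sum_right by (auto intro!: sum_mono mult_left_mono p(3))
  qed
  then show ?thesis using that by blast
qed

lemma bounded_Ph:
  assumes "positively_spanning v"
  shows "bounded (Ph v h)"
proof -
  have "\<exists>M. \<forall>x\<in>Ph v h. \<bar>x \<bullet> b\<bar> \<le> M" for b
  proof -
    have "b \<in> poshull (range v)" "-b \<in> poshull (range v)"
      using assms by (simp_all add: positively_spanning_def)
    then obtain M1 M2 where "\<And>x. x \<in> Ph v h \<Longrightarrow> x \<bullet> b \<le> M1" "\<And>x. x \<in> Ph v h \<Longrightarrow> x \<bullet> -b \<le> M2"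
      using Ph_inner_bounded_above by metis
    then show ?thesis by (intro exI[of _ "max M1 M2"]) force
  qed
  then obtain M where M: "\<And>b x. x \<in> Ph v h \<Longrightarrow> \<bar>x \<bullet> b\<bar> \<le> M b" by metis
  have "norm x \<le> (\<Sum>b\<in>Basis. M b)" if "x \<in> Ph v h" for x
  proof -
    have "(\<Sum>b\<in>Basis. \<bar>x \<bullet> b\<bar>) \<le> (\<Sum>b\<in>Basis. M b)"
      using M[OF that] by (intro sum_mono)
    then show ?thesis using norm_le_l1[of x] by linarith
  qed
  then show ?thesis unfolding bounded_iff by blast
qed

lemma polytope_Ph:
  assumes "positively_spanning v"
  shows "polytope (Ph v h)"
  using polytope_eq_bounded_polyhedron polyhedron_Ph bounded_Ph[OF assms] by blast

lemma face_of_tight_constraints: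
  fixes v :: "'n::finite \<Rightarrow> 'a::euclidean_space"
  assumes "convex P" "\<And>x j. x \<in> P \<Longrightarrow> x \<bullet> v j \<le> h $ j"
  shows "{y\<in>P. \<forall>s\<in>S. y \<bullet> v s = h $ s} face_of P"
proof -
  let ?a = "\<Sum>s\<in>S. v s" and ?b = "\<Sum>s\<in>S. h $ s"
  have a: "?a \<bullet> y = (\<Sum>s\<in>S. y \<bullet> v s)" for y
    unfolding inner_sum_left by (simp add: inner_commute)
  have le: "?a \<bullet> x \<le> ?b" if "x \<in> P" for x
    unfolding a using assms(2)[OF that] by (intro sum_mono) auto
  have "P \<inter> {x. ?a \<bullet> x = ?b} = {y\<in>P. \<forall>s\<in>S. y \<bullet> v s = h $ s}"
  proof safe
    fix y s assume y: "y \<in> P" "?a \<bullet> y = ?b" "s \<in> S"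
    have "(\<Sum>s\<in>S. h $ s - y \<bullet> v s) = 0"
      using y(2) by (simp add: sum_subtractf a)
    then have "\<forall>s\<in>S. h $ s - y \<bullet> v s = 0"
      using assms(2)[OF y(1)] by (subst (asm) sum_nonneg_eq_0_iff) auto
    then show "y \<bullet> v s = h $ s" using y(3) by auto
  qed (simp add: a)
  moreover have "(P \<inter> {x. ?a \<bullet> x = ?b}) face_of P"
    by (rule face_of_Int_supporting_hyperplane_le[OF assms(1) le])
  ultimately show ?thesis by simp
qed

lemma linear_functional_inner:
  fixes \<phi> :: "'a::euclidean_space \<Rightarrow> real"
  assumes "linear \<phi>"
  obtains w where "\<And>x. \<phi> x = w \<bullet> x"
  using adjoint_works[OF assms, of _ 1] by (metis inner_commute inner_real_def mult.right_neutral)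

lemma independent_prescribe_inner:
  fixes B :: "'a::euclidean_space set"
  assumes "independent B"
  obtains x where "\<And>b. b \<in> B \<Longrightarrow> x \<bullet> b = g b"
proof -
  obtain f :: "'a \<Rightarrow> real" where f: "linear f" "\<And>b. b \<in> B \<Longrightarrow> f b = g b"
    using linear_independent_extend[OF assms] by blast
  obtain w where "\<And>x. f x = w \<bullet> x" using linear_functional_inner[OF f(1)] by blast
  then show ?thesis using that f(2) by metis
qed

lemma orthogonal_spanning_eq_0:
  fixes d :: "'a::euclidean_space"
  assumes "span A = UNIV" "\<And>a. a \<in> A \<Longrightarrow> d \<bullet> a = 0"
  shows "d = 0"
  using orthogonal_to_span[of d A d] assms by (auto simp: orthogonal_def)

lemma span_UNIV_if_ball_subset:
  fixes A :: "'a::euclidean_space set"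
  assumes "ball a r \<subseteq> span A" "0 < r"
  shows "span A = UNIV"
proof -
  have "DIM('a) = dim (ball a r)"
    using dim_openin[of UNIV "ball a r"] assms(2) by simp
  also have "\<dots> \<le> dim A"
    using dim_subset[OF assms(1)] by simp
  finally show ?thesis
    using dim_eq_full dim_subset_UNIV le_antisym by metis
qed

lemma ex_pos_scale_below:
  fixes s a :: "'j \<Rightarrow> real"
  assumes "finite J" "\<And>j. j \<in> J \<Longrightarrow> 0 < s j"
  shows "\<exists>t>0. \<forall>j\<in>J. t * \<bar>a j\<bar> < s j"
  using assms
proof (induction J rule: finite_induct)
  case empty
  show ?case by (intro exI[of _ 1]) auto
next
  case (insert j J)
  then obtain t where t: "0 < t" "\<forall>i\<in>J. t * \<bar>a i\<bar> < s i" by blast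
  define t' where "t' = min t (s j / (\<bar>a j\<bar> + 1))"
  have sj: "0 < s j" using insert by auto
  have "t' * \<bar>a i\<bar> < s i" if "i \<in> J" for i
    using t that mult_right_mono[of t' t "\<bar>a i\<bar>"] by (fastforce simp: t'_def)
  moreover have "t' * \<bar>a j\<bar> < s j"
  proof -
    have "t' * \<bar>a j\<bar> \<le> s j / (\<bar>a j\<bar> + 1) * \<bar>a j\<bar>"
      unfolding t'_def by (intro mult_right_mono) auto
    also have "\<dots> < s j" using sj by (simp add: field_simps)
    finally show ?thesis .
  qed
  moreover have "0 < t'" unfolding t'_def using t sj by simp
  ultimately show ?case by auto
qed

lemma quadratic_fun_add:
  assumes "quadratic_fun p" "quadratic_fun q"
  shows "quadratic_fun (\<lambda>h. p h + q h)"
proof -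
  obtain A1 b1 c1 where p: "\<And>h. p h = (\<Sum>i\<in>UNIV. \<Sum>j\<in>UNIV. A1 i j * h $ i * h $ j) + (\<Sum>i\<in>UNIV. b1 i * h $ i) + c1"
    using assms(1) unfolding quadratic_fun_def by blast
  obtain A2 b2 c2 where q: "\<And>h. q h = (\<Sum>i\<in>UNIV. \<Sum>j\<in>UNIV. A2 i j * h $ i * h $ j) + (\<Sum>i\<in>UNIV. b2 i * h $ i) + c2"
    using assms(2) unfolding quadratic_fun_def by blast
  show ?thesis
    unfolding quadratic_fun_def
    by (intro exI[of _ "\<lambda>i j. A1 i j + A2 i j"] exI[of _ "\<lambda>i. b1 i + b2 i"] exI[of _ "c1 + c2"])
      (simp add: p q algebra_simps sum.distrib)
qed

lemma quadratic_fun_cmult: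
  assumes "quadratic_fun q"
  shows "quadratic_fun (\<lambda>h. r * q h)"
proof -
  obtain A b c where q: "\<And>h. q h = (\<Sum>i\<in>UNIV. \<Sum>j\<in>UNIV. A i j * h $ i * h $ j) + (\<Sum>i\<in>UNIV. b i * h $ i) + c"
    using assms unfolding quadratic_fun_def by blast
  show ?thesis
    unfolding quadratic_fun_def
    by (intro exI[of _ "\<lambda>i j. r * A i j"] exI[of _ "\<lambda>i. r * b i"] exI[of _ "r * c"])
      (simp add: q algebra_simps sum_distrib_left)
qed

lemma quadratic_fun_sum:
  fixes q :: "'k \<Rightarrow> real^'n::finite \<Rightarrow> real"
  assumes "finite K" "\<And>k. k \<in> K \<Longrightarrow> quadratic_fun (q k)"
  shows "quadratic_fun (\<lambda>h. \<Sum>k\<in>K. q k h)"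
  using assms
proof (induction K rule: finite_induct)
  case empty
  show ?case
    unfolding quadratic_fun_def by (intro exI[of _ "\<lambda>i j. 0"] exI[of _ "\<lambda>i. 0"] exI[of _ 0]) simp
next
  case (insert k K)
  then show ?case using quadratic_fun_add[of "q k" "\<lambda>h. \<Sum>k\<in>K. q k h"] by simp
qed

lemma quadratic_fun_square_affine:
  fixes a :: "'n::finite \<Rightarrow> real"
  shows "quadratic_fun (\<lambda>h. ((\<Sum>i\<in>UNIV. a i * h $ i) + c)^2)"
proof -
  have "((\<Sum>i\<in>UNIV. a i * h $ i) + c)^2 =
      (\<Sum>i\<in>UNIV. \<Sum>j\<in>UNIV. (a i * a j) * h $ i * h $ j) + (\<Sum>i\<in>UNIV. (2 * c * a i) * h $ i) + c^2"
    for h :: "real^'n"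
    by (simp add: power2_eq_square algebra_simps sum_product sum_distrib_left)
  then show ?thesis
    unfolding quadratic_fun_def
    by (intro exI[of _ "\<lambda>i j. a i * a j"] exI[of _ "\<lambda>i. 2 * c * a i"] exI[of _ "c^2"]) blast
qed

lemma quadratic_fun_least_squares:
  fixes L :: "nat \<Rightarrow> real^'n::finite \<Rightarrow> real"
  assumes "\<And>k. linear (L k)"
  shows "quadratic_fun (\<lambda>h. (1 / real m) * (\<Sum>k<m. (L k h - y k)^2))"
proof -
  have "quadratic_fun (\<lambda>h. (L k h - y k)^2)" for k
  proof -
    obtain w where w: "\<And>h. L k h = w \<bullet> h"
      using linear_functional_inner[OF assms] by blast
    show ?thesis
      using quadratic_fun_square_affine[of "\<lambda>i. w $ i" "- y k"] by (simp add: w inner_vec_def)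
  qed
  then show ?thesis by (intro quadratic_fun_cmult quadratic_fun_sum) auto
qed

lemma face_of_polytope_has_vertex:
  fixes Q :: "'a::euclidean_space set"
  assumes "polytope Q" "F face_of Q" "F \<noteq> {}"
  obtains z where "z extreme_point_of Q" "z \<in> F"
proof -
  have "compact F" "convex F"
    using assms(1,2) face_of_imp_compact face_of_imp_convex polytope_imp_compact polytope_imp_convex
    by blast+
  then obtain z where "z extreme_point_of F"
    using extreme_point_exists_convex assms(3) by blast
  then show ?thesis using that extreme_point_of_face[OF assms(2)] by blast
qed

lemma polytope_vertex_maximizes:
  fixes Q :: "'a::euclidean_space set"
  assumes "polytope Q" "Q \<noteq> {}"
  obtains z where "z extreme_point_of Q" "\<And>y. y \<in> Q \<Longrightarrow> y \<bullet> u \<le> z \<bullet> u"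
proof -
  have "continuous_on Q (\<lambda>y. y \<bullet> u)"
    by (intro continuous_intros)
  then obtain x where x: "x \<in> Q" "\<And>y. y \<in> Q \<Longrightarrow> y \<bullet> u \<le> x \<bullet> u"
    using continuous_attains_sup[OF polytope_imp_compact[OF assms(1)] assms(2)] by blast
  have "(Q \<inter> {y. u \<bullet> y = x \<bullet> u}) face_of Q"
    using x(2) by (intro face_of_Int_supporting_hyperplane_le polytope_imp_convex[OF assms(1)])
      (simp add: inner_commute)
  moreover have "x \<in> Q \<inter> {y. u \<bullet> y = x \<bullet> u}"
    using x(1) by (simp add: inner_commute)
  ultimately obtain z where "z extreme_point_of Q" "z \<in> Q \<inter> {y. u \<bullet> y = x \<bullet> u}"
    using face_of_polytope_has_vertex[OF assms(1)] by blast
  then show ?thesis using that x(2) by (simp add: inner_commute)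
qed

lemma polytope_vertex_normal_cone_contains_ball:
  fixes Q :: "'a::euclidean_space set"
  assumes "polytope Q" "z extreme_point_of Q"
  obtains a r where "0 < r" "ball a r \<subseteq> normal_cone Q {z}"
proof -
  define E where "E = {e. e extreme_point_of Q}"
  have Q: "Q = convex hull E" "finite E"
    unfolding E_def using assms(1)
    by (simp_all add: Krein_Milman_Minkowski polytope_imp_compact polytope_imp_convex
        finite_polyhedron_extreme_points polytope_imp_polyhedron)
  have "{z} exposed_face_of Q"
    using assms by (simp add: exposed_face_of_polyhedron polytope_imp_polyhedron face_of_singleton)
  then obtain a b where ab: "Q \<subseteq> {x. a \<bullet> x \<le> b}" "{z} = Q \<inter> {x. a \<bullet> x = b}"
    unfolding exposed_face_of_def by blast
  define U where "U = (\<Inter>e\<in>E - {z}. {u. e \<bullet> u < z \<bullet> u})"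
  have "open U"
    unfolding U_def using Q(2) by (intro open_INT) (auto intro!: open_Collect_less continuous_intros)
  moreover have "a \<in> U"
  proof -
    have "a \<bullet> e < b" if "e \<in> E - {z}" for e
      using that ab unfolding E_def extreme_point_of_def by fastforce
    moreover have "a \<bullet> z = b" using ab by blast
    ultimately show ?thesis unfolding U_def by (simp add: inner_commute)
  qed
  ultimately obtain r where r: "0 < r" "ball a r \<subseteq> U"
    using open_contains_ball by blast
  have "U \<subseteq> normal_cone Q {z}"
  proof
    fix u assume "u \<in> U"
    then have "e \<bullet> u \<le> z \<bullet> u" if "e \<in> E" for e
      using that unfolding U_def by (cases "e = z") (auto intro: less_imp_le)
    then have "E \<subseteq> {y. u \<bullet> y \<le> u \<bullet> z}"
      by (auto simp: inner_commute)
    then have "Q \<subseteq> {y. u \<bullet> y \<le> u \<bullet> z}"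
      unfolding Q(1) by (intro hull_minimal convex_halfspace_le)
    then show "u \<in> normal_cone Q {z}"
      unfolding normal_cone_def by (auto simp: inner_commute)
  qed
  then show ?thesis using that r by blast
qed

section \<open>The deformation cone of a simplicial normal fan\<close>

locale simplicial_normal_fan =
  fixes v :: "'n::finite \<Rightarrow> 'a::euclidean_space" and Delta :: "'a set set"
    and Q :: "'a set" and S :: "'a \<Rightarrow> 'n set"
  assumes positively_spanning: "positively_spanning v"
    and polytope_Q: "polytope Q"
    and normal_fan_Q: "normal_fan Q = Delta"
    and rays_bij: "bij_betw (\<lambda>i. poshull {v i}) UNIV {C\<in>Delta. dim C = 1}"
    and vertex_cone: "\<And>z. z extreme_point_of Q \<Longrightarrow> normal_cone Q {z} = poshull (v ` S z)"
    and vertex_generators_inj: "\<And>z. z extreme_point_of Q \<Longrightarrow> inj_on v (S z)"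
    and vertex_generators_independent: "\<And>z. z extreme_point_of Q \<Longrightarrow> independent (v ` S z)"
begin

lemma vertex_in_Q: "z extreme_point_of Q \<Longrightarrow> z \<in> Q"
  by (simp add: extreme_point_of_def)

lemma ray_in_fan: "poshull {v i} \<in> Delta" "dim (poshull {v i}) = 1"
  using bij_betwE[OF rays_bij] by auto

lemma ray_eq_iff: "poshull {v i} = poshull {v j} \<longleftrightarrow> i = j"
  using rays_bij unfolding bij_betw_def inj_on_def by blast

lemma generator_nonzero: "v i \<noteq> 0"
  using ray_in_fan(2)[of i] by (auto simp: dim_poshull)

lemma Q_nonempty: "Q \<noteq> {}"
  using ray_in_fan(1)[of undefined] face_of_imp_subset
  unfolding normal_fan_Q[symmetric] normal_fan_def by blast

lemma vertex_maximizing: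
  obtains z where "z extreme_point_of Q" "\<And>y. y \<in> Q \<Longrightarrow> y \<bullet> u \<le> z \<bullet> u"
  using polytope_vertex_maximizes[OF polytope_Q Q_nonempty] by blast

lemma vertex_cone_in_fan: "z extreme_point_of Q \<Longrightarrow> normal_cone Q {z} \<in> Delta"
  unfolding normal_fan_Q[symmetric] normal_fan_def by (auto simp: face_of_singleton)

lemma generator_in_vertex_cone:
  "z extreme_point_of Q \<Longrightarrow> s \<in> S z \<Longrightarrow> v s \<in> normal_cone Q {z}"
  using vertex_cone poshull_superset by blast

lemma vertex_maximizes_generator:
  "z extreme_point_of Q \<Longrightarrow> s \<in> S z \<Longrightarrow> y \<in> Q \<Longrightarrow> y \<bullet> v s \<le> z \<bullet> v s"
  using generator_in_vertex_cone unfolding normal_cone_def by blast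

lemma span_vertex_generators:
  assumes "z extreme_point_of Q"
  shows "span (v ` S z) = UNIV"
proof -
  obtain a r where "0 < r" "ball a r \<subseteq> poshull (v ` S z)"
    using polytope_vertex_normal_cone_contains_ball[OF polytope_Q assms] vertex_cone[OF assms]
    by metis
  then show ?thesis
    using poshull_subset_span span_UNIV_if_ball_subset by (metis subset_trans)
qed

text \<open>The ray spanned by \<open>v j\<close> is the normal cone of a face \<open>F\<close> of \<open>Q\<close>. Writing \<open>v j\<close> in the
  generators of the cone at \<open>z\<close>, every generator with positive weight is maximised on all of
  \<open>F\<close>, hence lies on that ray; since distinct indices span distinct rays, that generator is
  \<open>v j\<close>.\<close>

lemma maximized_generator_is_vertex_generator:
  assumes z: "z extreme_point_of Q" and jmax: "\<And>y. y \<in> Q \<Longrightarrow> y \<bullet> v j \<le> z \<bullet> v j"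
  shows "j \<in> S z"
proof -
  obtain F where F: "F face_of Q" "normal_cone Q F = poshull {v j}"
    using ray_in_fan(1)[of j] unfolding normal_fan_Q[symmetric] normal_fan_def by auto
  have "v j \<in> poshull (v ` S z)"
    using jmax unfolding vertex_cone[OF z, symmetric] normal_cone_def by simp
  then obtain c T where Tc: "v j = (\<Sum>w\<in>T. c w *\<^sub>R w)" "finite T" "T \<subseteq> v ` S z"
      "\<And>w. w \<in> T \<Longrightarrow> 0 \<le> c w"
    by (elim poshullE) blast
  have "\<exists>w\<in>T. c w \<noteq> 0"
  proof (rule ccontr)
    assume "\<not> ?thesis"
    then have "v j = 0" using Tc(1) by simp
    then show False using generator_nonzero by blast
  qed
  then obtain w where w: "w \<in> T" "c w \<noteq> 0" by blast
  obtain s where s: "s \<in> S z" "w = v s" using Tc(3) w(1) by blast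
  have T_max: "y \<bullet> w' \<le> z \<bullet> w'" if "w' \<in> T" "y \<in> Q" for w' y
    using Tc(3) that vertex_maximizes_generator[OF z] by blast
  have "w \<in> normal_cone Q F"
    unfolding normal_cone_def
  proof (intro CollectI ballI)
    fix x y assume x: "x \<in> F" and y: "y \<in> Q"
    have xQ: "x \<in> Q" using F(1) x face_of_imp_subset by blast
    have "v j \<in> normal_cone Q F" using F(2) poshull_superset by blast
    then have "z \<bullet> v j \<le> x \<bullet> v j"
      using x vertex_in_Q[OF z] unfolding normal_cone_def by blast
    then have "x \<bullet> v j = z \<bullet> v j" using jmax[OF xQ] by linarith
    have "x \<bullet> w = z \<bullet> w"
    proof (rule nonneg_combination_tight[of T c x z])
      show "x \<bullet> (\<Sum>w\<in>T. c w *\<^sub>R w) = z \<bullet> (\<Sum>w\<in>T. c w *\<^sub>R w)"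
        using Tc(1) \<open>x \<bullet> v j = z \<bullet> v j\<close> by simp
    qed (use Tc(2,4) T_max xQ w in auto)
    then show "y \<bullet> w \<le> x \<bullet> w" using T_max[OF w(1) y] by simp
  qed
  then have "v s \<in> poshull {v j}"
    using F(2) s(2) by simp
  then obtain c' where c': "v s = c' *\<^sub>R v j" "0 \<le> c'"
    unfolding poshull_singleton by blast
  with generator_nonzero[of s] have "0 < c'"
    by (cases "c' = 0") auto
  then have "poshull {v s} = poshull {v j}"
    using c'(1) poshull_singleton_scaleR by simp
  then show ?thesis using s(1) by (simp add: ray_eq_iff)
qed

lemma fan_cone_subset_vertex_cone:
  assumes "C \<in> Delta"
  obtains z where "z extreme_point_of Q" "C \<subseteq> normal_cone Q {z}"
proof -
  obtain F where F: "F face_of Q" "F \<noteq> {}" "C = normal_cone Q F"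
    using assms unfolding normal_fan_Q[symmetric] normal_fan_def by blast
  obtain z where "z extreme_point_of Q" "z \<in> F"
    using face_of_polytope_has_vertex[OF polytope_Q F(1,2)] by blast
  then show ?thesis using that F(3) unfolding normal_cone_def by blast
qed

text \<open>The candidate for the vertex of \<open>P(h)\<close> corresponding to the vertex \<open>z\<close> of \<open>Q\<close>: it makes
  the inequalities of the generators of the cone at \<open>z\<close> tight. The \<open>THE\<close> is well defined
  because these generators form a basis.\<close>

definition vertex_point :: "'a \<Rightarrow> real^'n \<Rightarrow> 'a" where
  "vertex_point z h = (THE x. \<forall>s\<in>S z. x \<bullet> v s = h $ s)"

lemma vertex_point_ex1:
  assumes z: "z extreme_point_of Q"
  shows "\<exists>!x. \<forall>s\<in>S z. x \<bullet> v s = h $ s"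
proof -
  obtain x where "\<And>b. b \<in> v ` S z \<Longrightarrow> x \<bullet> b = h $ inv_into (S z) v b"
    using independent_prescribe_inner[OF vertex_generators_independent[OF z],
        of "\<lambda>b. h $ inv_into (S z) v b"] by blast
  then have x: "\<forall>s\<in>S z. x \<bullet> v s = h $ s"
    using inv_into_f_f[OF vertex_generators_inj[OF z]] by simp
  moreover have "x' = x" if x': "\<forall>s\<in>S z. x' \<bullet> v s = h $ s" for x'
  proof -
    have "x' - x = 0"
      by (rule orthogonal_spanning_eq_0[OF span_vertex_generators[OF z]])
        (use x x' in \<open>auto simp: inner_diff_left\<close>)
    then show ?thesis by simp
  qed
  ultimately show ?thesis by blast
qed

lemma vertex_point_inner:
  "z extreme_point_of Q \<Longrightarrow> s \<in> S z \<Longrightarrow> vertex_point z h \<bullet> v s = h $ s"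
  unfolding vertex_point_def using theI'[OF vertex_point_ex1] by blast

lemma vertex_point_unique:
  "z extreme_point_of Q \<Longrightarrow> \<forall>s\<in>S z. x \<bullet> v s = h $ s \<Longrightarrow> vertex_point z h = x"
  unfolding vertex_point_def using the1_equality[OF vertex_point_ex1] by blast

lemma linear_vertex_point:
  assumes z: "z extreme_point_of Q"
  shows "linear (vertex_point z)"
proof
  fix h1 h2 :: "real^'n"
  show "vertex_point z (h1 + h2) = vertex_point z h1 + vertex_point z h2"
    using z by (intro vertex_point_unique) (simp_all add: inner_add_left vertex_point_inner)
next
  fix c :: real and h :: "real^'n"
  show "vertex_point z (c *\<^sub>R h) = c *\<^sub>R vertex_point z h"
    using z by (intro vertex_point_unique) (simp_all add: vertex_point_inner)
qed

definition vertex_feasible :: "(real^'n) set" where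
  "vertex_feasible = {h. \<forall>z j. z extreme_point_of Q \<longrightarrow> vertex_point z h \<bullet> v j \<le> h $ j}"

lemma vertex_point_in_Ph:
  "h \<in> vertex_feasible \<Longrightarrow> z extreme_point_of Q \<Longrightarrow> vertex_point z h \<in> Ph v h"
  unfolding vertex_feasible_def by simp

lemma vertex_point_maximizes:
  assumes z: "z extreme_point_of Q" and u: "u \<in> normal_cone Q {z}" and y: "y \<in> Ph v h"
  shows "y \<bullet> u \<le> vertex_point z h \<bullet> u"
proof (rule poshull_inner_le)
  show "u \<in> poshull (v ` S z)" using u vertex_cone[OF z] by simp
  fix w assume "w \<in> v ` S z"
  then show "y \<bullet> w \<le> vertex_point z h \<bullet> w"
    using y vertex_point_inner[OF z] by auto
qed

lemma support_fun_Ph_vertex_point: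
  assumes "h \<in> vertex_feasible" "z extreme_point_of Q" "u \<in> normal_cone Q {z}"
  shows "support_fun (Ph v h) u = vertex_point z h \<bullet> u"
  using assms by (intro support_fun_eqI vertex_point_in_Ph vertex_point_maximizes)

lemma support_fun_Ph_generator:
  assumes h: "h \<in> vertex_feasible"
  shows "support_fun (Ph v h) (v i) = h $ i"
proof -
  obtain z where z: "z extreme_point_of Q" "\<And>y. y \<in> Q \<Longrightarrow> y \<bullet> v i \<le> z \<bullet> v i"
    using vertex_maximizing[of "v i"] by blast
  have i: "i \<in> S z"
    using maximized_generator_is_vertex_generator[OF z] .
  show ?thesis
    using support_fun_Ph_vertex_point[OF h z(1) generator_in_vertex_cone[OF z(1) i]]
      vertex_point_inner[OF z(1) i] by simp
qed

lemma refines_normal_fan_Ph: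
  assumes h: "h \<in> vertex_feasible"
  shows "refines Delta (normal_fan (Ph v h))"
  unfolding refines_def
proof
  fix C assume "C \<in> Delta"
  then obtain z where z: "z extreme_point_of Q" "C \<subseteq> normal_cone Q {z}"
    by (rule fan_cone_subset_vertex_cone)
  define F where "F = {y\<in>Ph v h. \<forall>s\<in>S z. y \<bullet> v s = h $ s}"
  have "F face_of Ph v h"
    unfolding F_def by (rule face_of_tight_constraints[OF convex_Ph]) simp
  moreover have "vertex_point z h \<in> F"
    unfolding F_def using vertex_point_in_Ph[OF h z(1)] vertex_point_inner[OF z(1)] by simp
  moreover have "normal_cone Q {z} \<subseteq> normal_cone (Ph v h) F"
  proof
    fix u assume u: "u \<in> normal_cone Q {z}"
    show "u \<in> normal_cone (Ph v h) F"
      unfolding normal_cone_def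
    proof (intro CollectI ballI)
      fix x y assume "x \<in> F" "y \<in> Ph v h"
      moreover from \<open>x \<in> F\<close> have "vertex_point z h = x"
        unfolding F_def by (intro vertex_point_unique[OF z(1)]) simp
      ultimately show "y \<bullet> u \<le> x \<bullet> u"
        using vertex_point_maximizes[OF z(1) u] by blast
    qed
  qed
  ultimately show "\<exists>D\<in>normal_fan (Ph v h). C \<subseteq> D"
    unfolding normal_fan_def using z(2) by blast
qed

lemma vertex_feasible_subset_deformation_cone: "vertex_feasible \<subseteq> deformation_cone v Delta"
proof
  fix h assume h: "h \<in> vertex_feasible"
  obtain z where "z extreme_point_of Q"
    by (rule vertex_maximizing)
  then have "Ph v h \<noteq> {}" using vertex_point_in_Ph[OF h] by blast
  then show "h \<in> deformation_cone v Delta"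
    unfolding deformation_cone_def
    using polytope_Ph[OF positively_spanning] refines_normal_fan_Ph[OF h]
      support_fun_Ph_generator[OF h] by (intro CollectI exI[of _ "Ph v h"]) simp
qed

lemma deformation_cone_subset_vertex_feasible: "deformation_cone v Delta \<subseteq> vertex_feasible"
proof
  fix h assume "h \<in> deformation_cone v Delta"
  then obtain P where P: "polytope P" "refines Delta (normal_fan P)"
      "\<And>i. h $ i = support_fun P (v i)"
    unfolding deformation_cone_def by blast
  show "h \<in> vertex_feasible"
    unfolding vertex_feasible_def
  proof (intro CollectI allI impI)
    fix z j assume z: "z extreme_point_of Q"
    obtain F where F: "F face_of P" "F \<noteq> {}" "normal_cone Q {z} \<subseteq> normal_cone P F"
      using P(2) vertex_cone_in_fan[OF z] unfolding refines_def normal_fan_def by blast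
    obtain x where x: "x \<in> F" using F(2) by blast
    have xP: "x \<in> P" using F(1) x face_of_imp_subset by blast
    have "\<forall>s\<in>S z. x \<bullet> v s = h $ s"
    proof
      fix s assume "s \<in> S z"
      then have "v s \<in> normal_cone P F"
        using F(3) generator_in_vertex_cone[OF z] by blast
      then have "support_fun P (v s) = x \<bullet> v s"
        using x xP unfolding normal_cone_def by (intro support_fun_eqI) auto
      then show "x \<bullet> v s = h $ s" using P(3) by simp
    qed
    then have "vertex_point z h = x" by (rule vertex_point_unique[OF z])
    then show "vertex_point z h \<bullet> v j \<le> h $ j"
      using inner_le_support_fun[OF polytope_imp_bounded[OF P(1)] xP] P(3) by simp
  qed
qed

lemma deformation_cone_eq_vertex_feasible: "deformation_cone v Delta = vertex_feasible"
  using deformation_cone_subset_vertex_feasible vertex_feasible_subset_deformation_cone by blast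

lemma linear_vertex_point_inner:
  assumes "z extreme_point_of Q"
  shows "linear (\<lambda>h. vertex_point z h \<bullet> w)"
  using linear_vertex_point[OF assms] unfolding linear_iff by (simp add: inner_add_left)

lemma polyhedron_vertex_feasible: "polyhedron vertex_feasible"
proof -
  have "vertex_feasible =
      (\<Inter>(z, j)\<in>{z. z extreme_point_of Q} \<times> UNIV. {h. vertex_point z h \<bullet> v j - h $ j \<le> 0})"
    unfolding vertex_feasible_def by auto
  moreover have "polyhedron {h. vertex_point z h \<bullet> v j - h $ j \<le> 0}"
    if "z extreme_point_of Q" for z j
  proof -
    have "linear (\<lambda>h. vertex_point z h \<bullet> v j - h $ j)"
      using linear_vertex_point_inner[OF that, of "v j"] unfolding linear_iff
      by (simp add: algebra_simps)
    then obtain w where "\<And>h. vertex_point z h \<bullet> v j - h $ j = w \<bullet> h"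
      using linear_functional_inner by blast
    then show ?thesis using polyhedron_halfspace_le by simp
  qed
  moreover have "finite {z. z extreme_point_of Q}"
    using finite_polyhedron_extreme_points polytope_imp_polyhedron polytope_Q by blast
  ultimately show ?thesis by (auto intro!: polyhedron_Inter)
qed

lemma cone_vertex_feasible: "cone vertex_feasible"
  unfolding cone_def
proof (intro ballI allI impI)
  fix h and c :: real
  assume h: "h \<in> vertex_feasible" and c: "0 \<le> c"
  have "vertex_point z (c *\<^sub>R h) \<bullet> v j \<le> (c *\<^sub>R h) $ j" if z: "z extreme_point_of Q" for z j
  proof -
    have "vertex_point z h \<bullet> v j \<le> h $ j"
      using h z unfolding vertex_feasible_def by blast
    then show ?thesis
      using c linear_scale[OF linear_vertex_point[OF z]] by (simp add: mult_left_mono)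
  qed
  then show "c *\<^sub>R h \<in> vertex_feasible"
    unfolding vertex_feasible_def by blast
qed

lemma ls_objective_quadratic_on_vertex_feasible:
  "\<exists>q. quadratic_fun q \<and> (\<forall>h\<in>vertex_feasible. ls_objective v m u y h = q h)"
proof -
  have "\<exists>z. z extreme_point_of Q \<and> u k \<in> normal_cone Q {z}" for k
  proof -
    obtain z where "z extreme_point_of Q" "\<And>y. y \<in> Q \<Longrightarrow> y \<bullet> u k \<le> z \<bullet> u k"
      using vertex_maximizing[of "u k"] by blast
    then show ?thesis unfolding normal_cone_def by auto
  qed
  then obtain z where z: "\<And>k. z k extreme_point_of Q" "\<And>k. u k \<in> normal_cone Q {z k}"
    by metis
  define L where "L k h = vertex_point (z k) h \<bullet> u k" for k h
  have "quadratic_fun (\<lambda>h. (1 / real m) * (\<Sum>k<m. (L k h - y k)^2))"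
    unfolding L_def by (rule quadratic_fun_least_squares[OF linear_vertex_point_inner[OF z(1)]])
  moreover have "ls_objective v m u y h = (1 / real m) * (\<Sum>k<m. (L k h - y k)^2)"
    if "h \<in> vertex_feasible" for h
    unfolding ls_objective_def L_def using support_fun_Ph_vertex_point[OF that z] by simp
  ultimately show ?thesis by blast
qed

definition h_Q :: "real^'n" where
  "h_Q = (\<chi> j. support_fun Q (v j))"

lemma Q_inner_le_h_Q: "y \<in> Q \<Longrightarrow> y \<bullet> v j \<le> h_Q $ j"
  unfolding h_Q_def using inner_le_support_fun[OF polytope_imp_bounded[OF polytope_Q]] by simp

lemma vertex_generator_tight:
  assumes "z extreme_point_of Q" "s \<in> S z"
  shows "z \<bullet> v s = h_Q $ s"
proof -
  have "support_fun Q (v s) = z \<bullet> v s"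
    using vertex_maximizes_generator[OF assms] by (intro support_fun_eqI[OF vertex_in_Q[OF assms(1)]])
  then show ?thesis unfolding h_Q_def by simp
qed

lemma vertex_nongenerator_slack:
  assumes z: "z extreme_point_of Q" and j: "j \<notin> S z"
  shows "z \<bullet> v j < h_Q $ j"
proof -
  have "z \<bullet> v j \<noteq> h_Q $ j"
    using maximized_generator_is_vertex_generator[OF z, of j] Q_inner_le_h_Q j by force
  then show ?thesis
    using Q_inner_le_h_Q[OF vertex_in_Q[OF z], of j] by linarith
qed

text \<open>Starting from a vertex \<open>z\<close> on the \<open>i\<close>-th facet of \<open>Q\<close>, move along the direction dual
  to \<open>v i\<close> in the basis of generators at \<open>z\<close>: only the \<open>i\<close>-th inequality becomes violated.\<close>

lemma point_beyond_single_facet: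
  obtains z p where "z extreme_point_of Q" "i \<in> S z" "h_Q $ i < p \<bullet> v i"
    "\<And>j. j \<noteq> i \<Longrightarrow> p \<bullet> v j \<le> h_Q $ j"
proof -
  obtain z where z: "z extreme_point_of Q" "\<And>y. y \<in> Q \<Longrightarrow> y \<bullet> v i \<le> z \<bullet> v i"
    using vertex_maximizing[of "v i"] by blast
  have i: "i \<in> S z"
    using maximized_generator_is_vertex_generator[OF z] .
  define w where "w = vertex_point z (axis i 1)"
  have w: "w \<bullet> v s = (if s = i then 1 else 0)" if "s \<in> S z" for s
    using vertex_point_inner[OF z(1) that] unfolding w_def by (simp add: axis_def)
  obtain t where t: "0 < t" "\<forall>j\<in>- S z. t * \<bar>w \<bullet> v j\<bar> < h_Q $ j - z \<bullet> v j"
    using ex_pos_scale_below[of "- S z" "\<lambda>j. h_Q $ j - z \<bullet> v j" "\<lambda>j. w \<bullet> v j"]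
      vertex_nongenerator_slack[OF z(1)] by auto
  define p where "p = z + t *\<^sub>R w"
  have p: "p \<bullet> v j = z \<bullet> v j + t * (w \<bullet> v j)" for j
    unfolding p_def by (simp add: inner_add_left)
  have "h_Q $ i < p \<bullet> v i"
    using p w[OF i] vertex_generator_tight[OF z(1) i] t(1) by simp
  moreover have "p \<bullet> v j \<le> h_Q $ j" if "j \<noteq> i" for j
  proof (cases "j \<in> S z")
    case True
    then show ?thesis using p w that vertex_generator_tight[OF z(1)] by simp
  next
    case False
    have "t * (w \<bullet> v j) \<le> t * \<bar>w \<bullet> v j\<bar>"
      using t(1) by (intro mult_left_mono) auto
    moreover have "t * \<bar>w \<bullet> v j\<bar> < h_Q $ j - z \<bullet> v j"
      using t(2) False by blast
    ultimately show ?thesis using p[of j] by linarith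
  qed
  ultimately show ?thesis using that z(1) i by blast
qed

text \<open>\<open>P(g + e h_Q)\<close> contains \<open>P(g) + e Q\<close>, and \<open>Q\<close> has all \<open>n\<close> facets.\<close>

lemma irredundant_add_h_Q:
  assumes g: "g \<in> vertex_feasible" and e: "0 < e"
  shows "irredundant v (g + e *\<^sub>R h_Q)"
  unfolding irredundant_def
proof (intro conjI allI)
  have g_le: "vertex_point z g \<bullet> v j \<le> g $ j" if "z extreme_point_of Q" for z j
    using g that unfolding vertex_feasible_def by blast
  obtain z0 where z0: "z0 extreme_point_of Q"
    using vertex_maximizing by blast
  have "vertex_point z0 g + e *\<^sub>R z0 \<in> Ph v (g + e *\<^sub>R h_Q)"
    using g_le[OF z0] Q_inner_le_h_Q[OF vertex_in_Q[OF z0]] e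
    by (simp add: inner_add_left add_mono mult_left_mono)
  then show "Ph v (g + e *\<^sub>R h_Q) \<noteq> {}" by blast
next
  fix i
  obtain z p where zp: "z extreme_point_of Q" "i \<in> S z" "h_Q $ i < p \<bullet> v i"
      "\<And>j. j \<noteq> i \<Longrightarrow> p \<bullet> v j \<le> h_Q $ j"
    using point_beyond_single_facet[of i] by blast
  define x where "x = vertex_point z g + e *\<^sub>R p"
  have x: "x \<bullet> v j = vertex_point z g \<bullet> v j + e * (p \<bullet> v j)" for j
    unfolding x_def by (simp add: inner_add_left)
  have "x \<bullet> v j \<le> (g + e *\<^sub>R h_Q) $ j" if "j \<noteq> i" for j
    using x[of j] g zp(1) zp(4)[OF that] e unfolding vertex_feasible_def
    by (simp add: add_mono mult_left_mono)
  moreover have "x \<notin> Ph v (g + e *\<^sub>R h_Q)"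
  proof -
    have "e * h_Q $ i < e * (p \<bullet> v i)"
      using zp(3) e by simp
    then have "\<not> x \<bullet> v i \<le> (g + e *\<^sub>R h_Q) $ i"
      using x[of i] vertex_point_inner[OF zp(1,2), of g] by simp
    then show ?thesis by auto
  qed
  ultimately show "{x. \<forall>j. j \<noteq> i \<longrightarrow> x \<bullet> v j \<le> (g + e *\<^sub>R h_Q) $ j} \<noteq> Ph v (g + e *\<^sub>R h_Q)"
    by blast
qed

lemma vertex_feasible_subset_IRbar: "vertex_feasible \<subseteq> IRbar v"
proof
  fix g assume g: "g \<in> vertex_feasible"
  define x where "x k = g + (1 / Suc k) *\<^sub>R h_Q" for k
  have "x \<longlonglongrightarrow> g + 0 *\<^sub>R h_Q"
    unfolding x_def by (intro tendsto_intros LIMSEQ_inverse_real_of_nat[unfolded inverse_eq_divide])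
  moreover have "\<forall>k. x k \<in> {h. irredundant v h}"
    unfolding x_def using irredundant_add_h_Q[OF g] by simp
  ultimately show "g \<in> IRbar v"
    unfolding IRbar_def closure_sequential by auto
qed

end

lemma simplicial_normal_fan_exists:
  fixes v :: "'n::finite \<Rightarrow> 'a::euclidean_space"
  assumes ps: "positively_spanning v" and spf: "simplicial_polytopal_fan v Delta"
  obtains Q S where "simplicial_normal_fan v Delta Q S"
proof -
  obtain Q where Q: "polytope Q" "normal_fan Q = Delta"
    using spf unfolding simplicial_polytopal_fan_def by blast
  define S where "S z = (SOME S. normal_cone Q {z} = poshull (v ` S) \<and> inj_on v S \<and>
      independent (v ` S))" for z
  have "normal_cone Q {z} = poshull (v ` S z) \<and> inj_on v (S z) \<and> independent (v ` S z)"
    if "z extreme_point_of Q" for z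
  proof -
    have "normal_cone Q {z} \<in> Delta"
      using that Q(2) unfolding normal_fan_def by (auto simp: face_of_singleton)
    then show ?thesis
      using spf unfolding simplicial_polytopal_fan_def S_def by (metis (mono_tags, lifting) someI_ex)
  qed
  then have "simplicial_normal_fan v Delta Q S"
    using ps Q spf unfolding simplicial_polytopal_fan_def by unfold_locales auto
  then show ?thesis by (rule that)
qed

lemma polyhedron_deformation_cone:
  assumes "positively_spanning v" "simplicial_polytopal_fan v Delta"
  shows "polyhedron (deformation_cone v Delta)"
  using simplicial_normal_fan_exists[OF assms]
  by (metis simplicial_normal_fan.deformation_cone_eq_vertex_feasible
      simplicial_normal_fan.polyhedron_vertex_feasible)

lemma cone_deformation_cone:
  assumes "positively_spanning v" "simplicial_polytopal_fan v Delta"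
  shows "cone (deformation_cone v Delta)"
  using simplicial_normal_fan_exists[OF assms]
  by (metis simplicial_normal_fan.deformation_cone_eq_vertex_feasible
      simplicial_normal_fan.cone_vertex_feasible)

lemma ls_objective_quadratic_on_deformation_cone:
  assumes "positively_spanning v" "simplicial_polytopal_fan v Delta"
  shows "\<exists>q. quadratic_fun q \<and> (\<forall>h\<in>deformation_cone v Delta. ls_objective v m u y h = q h)"
  using simplicial_normal_fan_exists[OF assms]
  by (metis simplicial_normal_fan.deformation_cone_eq_vertex_feasible
      simplicial_normal_fan.ls_objective_quadratic_on_vertex_feasible)

lemma deformation_cone_subset_IRbar:
  assumes "positively_spanning v" "simplicial_polytopal_fan v Delta"
  shows "deformation_cone v Delta \<subseteq> IRbar v"
  using simplicial_normal_fan_exists[OF assms]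
  by (metis simplicial_normal_fan.deformation_cone_eq_vertex_feasible
      simplicial_normal_fan.vertex_feasible_subset_IRbar)

section \<open>Approximating irredundant vectors by simplicial fans\<close>

lemma irredundant_imp_nonzero:
  assumes "irredundant v h"
  shows "v i \<noteq> 0"
proof
  assume vi: "v i = 0"
  obtain x0 where "x0 \<in> Ph v h"
    using assms unfolding irredundant_def ex_in_conv[symmetric] by blast
  then have "x0 \<bullet> v i \<le> h $ i" by simp
  then have "0 \<le> h $ i" using vi by simp
  then have "{x. \<forall>j. j \<noteq> i \<longrightarrow> x \<bullet> v j \<le> h $ j} = Ph v h"
    using vi by (auto simp: Ph_def) (metis inner_zero_right)
  then show False using assms unfolding irredundant_def by blast
qed

lemma irredundant_violator:
  assumes "irredundant v h"
  obtains y where "\<And>j. j \<noteq> i \<Longrightarrow> y \<bullet> v j \<le> h $ j" "h $ i < y \<bullet> v i"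
proof -
  have "{x. \<forall>j. j \<noteq> i \<longrightarrow> x \<bullet> v j \<le> h $ j} \<noteq> Ph v h"
    using assms unfolding irredundant_def by blast
  moreover have "Ph v h \<subseteq> {x. \<forall>j. j \<noteq> i \<longrightarrow> x \<bullet> v j \<le> h $ j}" by auto
  ultimately obtain y where "\<forall>j. j \<noteq> i \<longrightarrow> y \<bullet> v j \<le> h $ j" "y \<notin> Ph v h" by blast
  moreover from this have "h $ i < y \<bullet> v i" by (metis mem_Ph not_le)
  ultimately show ?thesis using that by blast
qed

definition strictly_irredundant :: "('n::finite \<Rightarrow> 'a::euclidean_space) \<Rightarrow> real^'n \<Rightarrow> bool" where
  "strictly_irredundant v h \<longleftrightarrow> (\<forall>i. \<exists>x. x \<bullet> v i = h $ i \<and> (\<forall>j. j \<noteq> i \<longrightarrow> x \<bullet> v j < h $ j))"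

definition facet_point :: "('n::finite \<Rightarrow> 'a::euclidean_space) \<Rightarrow> real^'n \<Rightarrow> 'n \<Rightarrow> 'a" where
  "facet_point v h i = (SOME x. x \<bullet> v i = h $ i \<and> (\<forall>j. j \<noteq> i \<longrightarrow> x \<bullet> v j < h $ j))"

lemma facet_point_spec:
  assumes "strictly_irredundant v h"
  shows "facet_point v h i \<bullet> v i = h $ i \<and> (\<forall>j. j \<noteq> i \<longrightarrow> facet_point v h i \<bullet> v j < h $ j)"
  unfolding facet_point_def
  using assms[unfolded strictly_irredundant_def, rule_format, of i] by (rule someI_ex)

lemma facet_point_inner: "strictly_irredundant v h \<Longrightarrow> facet_point v h i \<bullet> v i = h $ i"
  using facet_point_spec by blast

lemma facet_point_strict:
  assumes "strictly_irredundant v h" "i \<noteq> j"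
  shows "facet_point v h i \<bullet> v j < h $ j"
  using facet_point_spec[OF assms(1), of i] assms(2) by simp

lemma facet_point_in_Ph:
  assumes "strictly_irredundant v h"
  shows "facet_point v h i \<in> Ph v h"
  unfolding mem_Ph
proof
  fix j
  show "facet_point v h i \<bullet> v j \<le> h $ j"
    using facet_point_inner[OF assms, of i] facet_point_strict[OF assms, of i j]
    by (cases "i = j") auto
qed

lemma shifted_facet_point:
  assumes x0: "x0 \<in> Ph v h" and y: "\<And>j. j \<noteq> i \<Longrightarrow> y \<bullet> v j \<le> h $ j"
    and \<delta>: "0 < \<delta>" "h $ i + \<delta> \<le> y \<bullet> v i"
  shows "\<exists>x. x \<bullet> v i = h $ i + \<delta> \<and> (\<forall>j. j \<noteq> i \<longrightarrow> x \<bullet> v j < h $ j + \<delta>)"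
proof -
  define D where "D = y \<bullet> v i - x0 \<bullet> v i"
  define s where "s = (h $ i + \<delta> - x0 \<bullet> v i) / D"
  define x where "x = x0 + s *\<^sub>R (y - x0)"
  have x0i: "x0 \<bullet> v i \<le> h $ i" using x0 by simp
  then have D: "0 < D" unfolding D_def using \<delta> by linarith
  have s: "0 \<le> s" "s \<le> 1"
    unfolding s_def using D x0i \<delta> by (simp_all add: D_def)
  have x: "x \<bullet> v j = (1 - s) * (x0 \<bullet> v j) + s * (y \<bullet> v j)" for j
    unfolding x_def by (simp add: algebra_simps)
  have "x \<bullet> v i = x0 \<bullet> v i + s * D"
    unfolding x_def D_def by (simp add: algebra_simps)
  also have "s * D = h $ i + \<delta> - x0 \<bullet> v i"
    unfolding s_def using D by simp
  finally have "x \<bullet> v i = h $ i + \<delta>" by simp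
  moreover have "x \<bullet> v j < h $ j + \<delta>" if "j \<noteq> i" for j
  proof -
    have "(1 - s) * (x0 \<bullet> v j) + s * (y \<bullet> v j) \<le> (1 - s) * h $ j + s * h $ j"
      using x0 y[OF that] s by (intro add_mono mult_left_mono) auto
    then show ?thesis using x[of j] \<delta>(1) by (simp add: algebra_simps)
  qed
  ultimately show ?thesis by blast
qed

lemma irredundant_shift_strictly_irredundant:
  assumes irr: "irredundant v h"
  obtains \<delta>0 where "0 < \<delta>0"
    "\<And>\<delta>. 0 < \<delta> \<Longrightarrow> \<delta> < \<delta>0 \<Longrightarrow> strictly_irredundant v (h + \<delta> *\<^sub>R (\<chi> k. 1))"
proof -
  obtain x0 where x0: "x0 \<in> Ph v h"
    using irr unfolding irredundant_def ex_in_conv[symmetric] by blast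
  have "\<exists>y. (\<forall>j. j \<noteq> i \<longrightarrow> y \<bullet> v j \<le> h $ j) \<and> h $ i < y \<bullet> v i" for i
    using irredundant_violator[OF irr, of i] by blast
  then obtain y where y: "\<And>i j. j \<noteq> i \<Longrightarrow> y i \<bullet> v j \<le> h $ j" "\<And>i. h $ i < y i \<bullet> v i"
    by metis
  obtain \<delta>0 where \<delta>0: "0 < \<delta>0" "\<forall>i\<in>UNIV. \<delta>0 * \<bar>1\<bar> < y i \<bullet> v i - h $ i"
    using ex_pos_scale_below[of UNIV "\<lambda>i. y i \<bullet> v i - h $ i" "\<lambda>_. 1"] y(2) by auto
  have gap: "h $ i + \<delta>0 < y i \<bullet> v i" for i
    using \<delta>0(2) by (simp add: algebra_simps)
  have "strictly_irredundant v (h + \<delta> *\<^sub>R (\<chi> k. 1))" if "0 < \<delta>" "\<delta> < \<delta>0" for \<delta>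
    unfolding strictly_irredundant_def
  proof
    fix i
    have "h $ i + \<delta> \<le> y i \<bullet> v i" using gap[of i] that(2) by linarith
    then show "\<exists>x. x \<bullet> v i = (h + \<delta> *\<^sub>R (\<chi> k. 1)) $ i \<and>
        (\<forall>j. j \<noteq> i \<longrightarrow> x \<bullet> v j < (h + \<delta> *\<^sub>R (\<chi> k. 1)) $ j)"
      using shifted_facet_point[OF x0 y(1) that(1)] by simp
  qed
  then show ?thesis using that \<delta>0(1) by blast
qed

lemma strictly_irredundant_open:
  assumes si: "strictly_irredundant v h" and nz: "\<And>i. v i \<noteq> 0"
  obtains r where "0 < r" "\<And>h'. dist h' h < r \<Longrightarrow> strictly_irredundant v h'"
proof -
  define x where "x = facet_point v h"
  have x: "\<And>i. x i \<bullet> v i = h $ i" "\<And>i j. i \<noteq> j \<Longrightarrow> x i \<bullet> v j < h $ j"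
    using si by (simp_all add: x_def facet_point_inner facet_point_strict facet_point_in_Ph del: mem_Ph)
  define c where "c i j = (v i \<bullet> v j) / (v i \<bullet> v i)" for i j
  have "\<exists>r>0. \<forall>p\<in>{p. snd p \<noteq> fst p}.
      r * \<bar>1 + \<bar>c (fst p) (snd p)\<bar>\<bar> < h $ snd p - x (fst p) \<bullet> v (snd p)"
    by (rule ex_pos_scale_below) (auto simp: x(2))
  then obtain r where r: "0 < r"
      "\<And>i j. j \<noteq> i \<Longrightarrow> r * \<bar>1 + \<bar>c i j\<bar>\<bar> < h $ j - x i \<bullet> v j"
    by auto
  have "strictly_irredundant v h'" if "dist h' h < r" for h'
    unfolding strictly_irredundant_def
  proof
    fix i
    have comp: "\<bar>h' $ k - h $ k\<bar> < r" for k
      using component_le_norm_cart[of "h' - h" k] that by (simp add: dist_norm)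
    define x' where "x' = x i + ((h' $ i - h $ i) / (v i \<bullet> v i)) *\<^sub>R v i"
    have "x' \<bullet> v i = h' $ i"
      unfolding x'_def using x(1) nz by (simp add: inner_add_left)
    moreover have "x' \<bullet> v j < h' $ j" if "j \<noteq> i" for j
    proof -
      have "x' \<bullet> v j = x i \<bullet> v j + (h' $ i - h $ i) * c i j"
        unfolding x'_def c_def by (simp add: inner_add_left)
      moreover have "(h' $ i - h $ i) * c i j \<le> \<bar>h' $ i - h $ i\<bar> * \<bar>c i j\<bar>"
        by (metis abs_ge_self abs_mult)
      moreover have "\<bar>h' $ i - h $ i\<bar> * \<bar>c i j\<bar> \<le> r * \<bar>c i j\<bar>"
        using comp[of i] by (intro mult_right_mono) auto
      moreover have "r + r * \<bar>c i j\<bar> < h $ j - x i \<bullet> v j"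
        using r(2)[OF that] by (simp add: distrib_left)
      ultimately show ?thesis using comp[of j] by linarith
    qed
    ultimately show "\<exists>x. x \<bullet> v i = h' $ i \<and> (\<forall>j. j \<noteq> i \<longrightarrow> x \<bullet> v j < h' $ j)"
      by blast
  qed
  then show ?thesis using that r(1) by blast
qed

definition generic :: "('n::finite \<Rightarrow> 'a::euclidean_space) \<Rightarrow> real^'n \<Rightarrow> bool" where
  "generic v h \<longleftrightarrow> (\<forall>x S. (\<forall>s\<in>S. x \<bullet> v s = h $ s) \<longrightarrow> inj_on v S \<and> independent (v ` S))"

lemma dependent_constraints_hyperplane:
  fixes v :: "'n::finite \<Rightarrow> 'a::euclidean_space"
  assumes "\<not> (inj_on v S \<and> independent (v ` S))"
  obtains a :: "real^'n" where "a \<noteq> 0" "\<And>h x. \<forall>s\<in>S. x \<bullet> v s = h $ s \<Longrightarrow> a \<bullet> h = 0"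
proof (cases "inj_on v S")
  case False
  then obtain j k where jk: "j \<in> S" "k \<in> S" "j \<noteq> k" "v j = v k"
    unfolding inj_on_def by blast
  define a :: "real^'n" where "a = axis j 1 - axis k 1"
  have "a $ j = 1" unfolding a_def using jk(3) by (simp add: axis_def)
  then have "a \<noteq> 0" by auto
  moreover have "a \<bullet> h = 0" if "\<forall>s\<in>S. x \<bullet> v s = h $ s" for h x
  proof -
    have "h $ j = h $ k"
      using that jk by metis
    moreover have "a \<bullet> h = h $ j - h $ k"
      unfolding a_def by (simp add: inner_diff_left inner_axis')
    ultimately show ?thesis by simp
  qed
  ultimately show ?thesis using that by blast
next
  case True
  then have "dependent (v ` S)" using assms by simp
  then obtain c where c: "\<exists>w\<in>v ` S. c w \<noteq> 0" "(\<Sum>w\<in>v ` S. c w *\<^sub>R w) = 0"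
    using dependent_finite[of "v ` S"] by auto
  define a :: "real^'n" where "a = (\<chi> i. if i \<in> S then c (v i) else 0)"
  have "a \<noteq> 0" using c(1) unfolding a_def by (auto simp: vec_eq_iff)
  moreover have "a \<bullet> h = 0" if x: "\<forall>s\<in>S. x \<bullet> v s = h $ s" for h x
  proof -
    have "a \<bullet> h = (\<Sum>i\<in>UNIV. if i \<in> S then c (v i) * h $ i else 0)"
      unfolding a_def inner_vec_def by (intro sum.cong) auto
    also have "\<dots> = (\<Sum>i\<in>S. c (v i) * (x \<bullet> v i))"
      using x by (simp add: sum.If_cases)
    also have "\<dots> = x \<bullet> (\<Sum>w\<in>v ` S. c w *\<^sub>R w)"
      by (simp add: inner_sum_right sum.reindex[OF True])
    finally show ?thesis using c(2) by simp
  qed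
  ultimately show ?thesis using that by blast
qed

lemma interior_Union_hyperplanes:
  fixes A :: "'b::euclidean_space set"
  assumes "finite A" "0 \<notin> A"
  shows "interior (\<Union>a\<in>A. {x. a \<bullet> x = 0}) = {}"
  using assms
proof (induction A rule: finite_induct)
  case (insert a A)
  then have "interior (\<Union>b\<in>A. {x. b \<bullet> x = 0}) = {}" by simp
  then have "interior ({x. a \<bullet> x = 0} \<union> (\<Union>b\<in>A. {x. b \<bullet> x = 0})) = interior {x. a \<bullet> x = 0}"
    by (rule interior_closed_Un_empty_interior[OF closed_hyperplane])
  also have "\<dots> = {}" using insert by (intro interior_hyperplane) auto
  finally show ?case by simp
qed simp

lemma generic_dense:
  fixes v :: "'n::finite \<Rightarrow> 'a::euclidean_space"
  assumes "0 < r"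
  obtains h' where "dist h' h < r" "generic v h'"
proof -
  define bad where "bad = {S. \<not> (inj_on v S \<and> independent (v ` S))}"
  define a where "a S = (SOME a::real^'n. a \<noteq> 0 \<and>
      (\<forall>h x. (\<forall>s\<in>S. x \<bullet> v s = h $ s) \<longrightarrow> a \<bullet> h = 0))" for S
  have "a S \<noteq> 0 \<and> (\<forall>h x. (\<forall>s\<in>S. x \<bullet> v s = h $ s) \<longrightarrow> a S \<bullet> h = 0)"
    if "S \<in> bad" for S
    unfolding a_def
  proof (rule someI_ex)
    have "\<not> (inj_on v S \<and> independent (v ` S))"
      using that unfolding bad_def by simp
    then show "\<exists>a::real^'n. a \<noteq> 0 \<and> (\<forall>h x. (\<forall>s\<in>S. x \<bullet> v s = h $ s) \<longrightarrow> a \<bullet> h = 0)"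
      by (rule dependent_constraints_hyperplane) blast
  qed
  then have a: "\<And>S. S \<in> bad \<Longrightarrow> a S \<noteq> 0"
      "\<And>S h x. S \<in> bad \<Longrightarrow> \<forall>s\<in>S. x \<bullet> v s = h $ s \<Longrightarrow> a S \<bullet> h = 0"
    by blast+
  have "finite (a ` bad)" by simp
  moreover have "0 \<notin> a ` bad" using a(1) by auto
  ultimately have "interior (\<Union>b\<in>a ` bad. {x. b \<bullet> x = 0}) = {}"
    by (rule interior_Union_hyperplanes)
  then have "\<not> ball h r \<subseteq> (\<Union>b\<in>a ` bad. {x. b \<bullet> x = 0})"
    using interior_maximal[OF _ open_ball, of h r] centre_in_ball[of h r] assms by blast
  then obtain h' where "h' \<in> ball h r" "h' \<notin> (\<Union>b\<in>a ` bad. {x. b \<bullet> x = 0})"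
    by blast
  then have h': "dist h' h < r" "\<And>S. S \<in> bad \<Longrightarrow> a S \<bullet> h' \<noteq> 0"
    by (auto simp: dist_commute)
  have "generic v h'"
    unfolding generic_def
  proof (intro allI impI)
    fix x S assume xS: "\<forall>s\<in>S. x \<bullet> v s = h' $ s"
    show "inj_on v S \<and> independent (v ` S)"
    proof (rule ccontr)
      assume "\<not> ?thesis"
      then have "S \<in> bad" unfolding bad_def by simp
      then show False using h'(2) a(2) xS by blast
    qed
  qed
  then show ?thesis using that h'(1) by blast
qed

definition tight_set :: "('n::finite \<Rightarrow> 'a::euclidean_space) \<Rightarrow> real^'n \<Rightarrow> 'a set \<Rightarrow> 'n set" where
  "tight_set v h F = {j. \<forall>x\<in>F. x \<bullet> v j = h $ j}"

lemma face_point_strict_off_tight: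
  assumes F: "F face_of Ph v h" "F \<noteq> {}"
  obtains x where "x \<in> F" "\<And>j. j \<notin> tight_set v h F \<Longrightarrow> x \<bullet> v j < h $ j"
proof -
  define J where "J = - tight_set v h F"
  have FP: "F \<subseteq> Ph v h" using F(1) face_of_imp_subset by blast
  have "\<exists>x\<in>F. x \<bullet> v j < h $ j" if j: "j \<in> J" for j
  proof -
    obtain x where "x \<in> F" "x \<bullet> v j \<noteq> h $ j"
      using j unfolding J_def tight_set_def by blast
    moreover from this have "x \<bullet> v j \<le> h $ j" using FP by auto
    ultimately show ?thesis by force
  qed
  then obtain y where y: "\<And>j. j \<in> J \<Longrightarrow> y j \<in> F" "\<And>j. j \<in> J \<Longrightarrow> y j \<bullet> v j < h $ j"
    by metis
  show ?thesis
  proof (cases "J = {}")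
    case True
    then show ?thesis using that F(2) unfolding J_def by auto
  next
    case False
    define x where "x = (\<Sum>j\<in>J. (1 / card J) *\<^sub>R y j)"
    have card: "0 < card J" using False by (simp add: card_gt_0_iff)
    have "x \<in> F"
      unfolding x_def using card y(1)
      by (intro convex_sum face_of_imp_convex[OF F(1)]) auto
    moreover have "x \<bullet> v k < h $ k" if k: "k \<in> J" for k
    proof -
      have "x \<bullet> v k = (\<Sum>j\<in>J. (1 / card J) * (y j \<bullet> v k))"
        unfolding x_def by (simp add: inner_sum_left)
      also have "\<dots> < (\<Sum>j\<in>J. (1 / card J) * h $ k)"
      proof (rule sum_strict_mono_ex1)
        show "\<forall>j\<in>J. (1 / card J) * (y j \<bullet> v k) \<le> (1 / card J) * h $ k"
        proof
          fix j assume "j \<in> J"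
          then have "y j \<in> Ph v h" using y(1) FP by blast
          then have "y j \<bullet> v k \<le> h $ k" by simp
          then show "(1 / card J) * (y j \<bullet> v k) \<le> (1 / card J) * h $ k"
            by (intro mult_left_mono) auto
        qed
        show "\<exists>j\<in>J. (1 / card J) * (y j \<bullet> v k) < (1 / card J) * h $ k"
          using y(2)[OF k] card by (intro bexI[OF _ k]) (simp add: divide_strict_right_mono)
      qed simp
      also have "\<dots> = h $ k" using card False by simp
      finally show ?thesis .
    qed
    ultimately show ?thesis using that unfolding J_def by auto
  qed
qed

lemma Ph_feasible_direction:
  assumes x: "x \<in> Ph v h" "\<And>j. j \<notin> T \<Longrightarrow> x \<bullet> v j < h $ j"
    and d: "\<And>t. t \<in> T \<Longrightarrow> d \<bullet> v t \<le> 0"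
  obtains t where "0 < t" "x + t *\<^sub>R d \<in> Ph v h"
proof -
  obtain t where t: "0 < t" "\<forall>j\<in>- T. t * \<bar>d \<bullet> v j\<bar> < h $ j - x \<bullet> v j"
    using ex_pos_scale_below[of "- T" "\<lambda>j. h $ j - x \<bullet> v j" "\<lambda>j. d \<bullet> v j"] x(2) by auto
  have "(x + t *\<^sub>R d) \<bullet> v j \<le> h $ j" for j
  proof (cases "j \<in> T")
    case True
    then have "t * (d \<bullet> v j) \<le> 0" using d t(1) by (simp add: mult_nonneg_nonpos)
    moreover have "x \<bullet> v j \<le> h $ j" using x(1) by simp
    ultimately show ?thesis unfolding inner_add_left inner_scaleR_left by linarith
  next
    case False
    have "t * (d \<bullet> v j) \<le> t * \<bar>d \<bullet> v j\<bar>" using t(1) by (intro mult_left_mono) auto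
    moreover have "t * \<bar>d \<bullet> v j\<bar> < h $ j - x \<bullet> v j" using t(2) False by simp
    ultimately show ?thesis by (simp add: inner_add_left)
  qed
  then show ?thesis using that t(1) by simp
qed

lemma independent_dual_cone_imp_poshull:
  fixes A :: "'a::euclidean_space set"
  assumes A: "independent A" and u: "\<And>d. \<forall>a\<in>A. d \<bullet> a \<le> 0 \<Longrightarrow> d \<bullet> u \<le> 0"
  shows "u \<in> poshull A"
proof -
  obtain B where B: "A \<subseteq> B" "independent B" "UNIV \<subseteq> span B"
    by (rule maximal_independent_subset_extend[OF subset_UNIV A])
  have fB: "finite B" using B(2) by (rule finiteI_independent)
  obtain c where c: "u = (\<Sum>b\<in>B. c b *\<^sub>R b)"
    using B(3) unfolding span_finite[OF fB] by auto
  have dual: "\<exists>d. (\<forall>b'\<in>B. d \<bullet> b' = (if b' = b then 1 else 0)) \<and> d \<bullet> u = c b" if "b \<in> B" for b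
  proof -
    obtain d where d: "\<And>b'. b' \<in> B \<Longrightarrow> d \<bullet> b' = (if b' = b then 1 else 0)"
      using independent_prescribe_inner[OF B(2), of "\<lambda>b'. if b' = b then 1 else 0"] by blast
    have "d \<bullet> u = (\<Sum>b'\<in>B. c b' * (d \<bullet> b'))" unfolding c by (simp add: inner_sum_right)
    also have "\<dots> = (\<Sum>b'\<in>B. if b' = b then c b' else 0)"
      using d by (intro sum.cong) auto
    also have "\<dots> = c b" using that fB by simp
    finally show ?thesis using d by blast
  qed
  have "c b = 0" if b: "b \<in> B - A" for b
  proof -
    obtain d where d: "\<forall>b'\<in>B. d \<bullet> b' = (if b' = b then 1 else 0)" "d \<bullet> u = c b"
      using dual b by blast
    have "\<forall>a\<in>A. d \<bullet> a = 0" using d(1) B(1) b by auto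
    then have "d \<bullet> u \<le> 0" "(- d) \<bullet> u \<le> 0" using u[of d] u[of "- d"] by auto
    then show ?thesis using d(2) by simp
  qed
  moreover have "0 \<le> c b" if b: "b \<in> A" for b
  proof -
    obtain d where d: "\<forall>b'\<in>B. d \<bullet> b' = (if b' = b then 1 else 0)" "d \<bullet> u = c b"
      using dual b B(1) by blast
    have "\<forall>a\<in>A. (- d) \<bullet> a \<le> 0" using d(1) B(1) by auto
    then show ?thesis using u d(2) by fastforce
  qed
  moreover have "finite A" using fB B(1) finite_subset by blast
  ultimately have "(\<Sum>b\<in>A. c b *\<^sub>R b) \<in> poshull A"
    by (intro poshullI) auto
  moreover have "(\<Sum>b\<in>A. c b *\<^sub>R b) = u"
    unfolding c using \<open>\<And>b. b \<in> B - A \<Longrightarrow> c b = 0\<close>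
    by (intro sum.mono_neutral_left[OF fB B(1)]) auto
  ultimately show ?thesis by simp
qed

lemma poshull_tight_subset_normal_cone:
  "poshull (v ` tight_set v h F) \<subseteq> normal_cone (Ph v h) F"
proof
  fix u assume u: "u \<in> poshull (v ` tight_set v h F)"
  show "u \<in> normal_cone (Ph v h) F"
    unfolding normal_cone_def
  proof (intro CollectI ballI)
    fix x y assume "x \<in> F" "y \<in> Ph v h"
    then show "y \<bullet> u \<le> x \<bullet> u"
      by (intro poshull_inner_le[OF u]) (auto simp: tight_set_def)
  qed
qed

text \<open>For generic \<open>h\<close> the tight normals of a face are independent, so the normal cone, being
  the polar of the cone of feasible directions, is generated by them.\<close>

lemma normal_cone_Ph_face:
  assumes gen: "generic v h" and F: "F face_of Ph v h" "F \<noteq> {}"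
  shows "normal_cone (Ph v h) F = poshull (v ` tight_set v h F)"
proof
  show "normal_cone (Ph v h) F \<subseteq> poshull (v ` tight_set v h F)"
  proof
    fix u assume u: "u \<in> normal_cone (Ph v h) F"
    let ?T = "tight_set v h F"
    obtain x where x: "x \<in> F" "\<And>j. j \<notin> ?T \<Longrightarrow> x \<bullet> v j < h $ j"
      using face_point_strict_off_tight[OF F] by blast
    have xP: "x \<in> Ph v h" using F(1) x(1) face_of_imp_subset by blast
    have "\<forall>s\<in>?T. x \<bullet> v s = h $ s"
      using x(1) unfolding tight_set_def by blast
    then have "independent (v ` ?T)"
      using gen[unfolded generic_def, rule_format] by blast
    moreover have "d \<bullet> u \<le> 0" if d: "\<forall>a\<in>v ` ?T. d \<bullet> a \<le> 0" for d
    proof -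
      obtain t where t: "0 < t" "x + t *\<^sub>R d \<in> Ph v h"
        using Ph_feasible_direction[where d = d, OF xP x(2)] d by auto
      then have "(x + t *\<^sub>R d) \<bullet> u \<le> x \<bullet> u"
        using u x(1) unfolding normal_cone_def by blast
      then show ?thesis using t(1) by (simp add: inner_add_left mult_le_0_iff)
    qed
    ultimately show "u \<in> poshull (v ` ?T)"
      by (rule independent_dual_cone_imp_poshull)
  qed
qed (rule poshull_tight_subset_normal_cone)

lemma strictly_irredundant_facet:
  assumes "strictly_irredundant v h"
  obtains F where "F face_of Ph v h" "F \<noteq> {}" "tight_set v h F = {i}"
proof -
  define x where "x = facet_point v h"
  have x: "\<And>i. x i \<bullet> v i = h $ i" "\<And>i j. i \<noteq> j \<Longrightarrow> x i \<bullet> v j < h $ j"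
      "\<And>i. x i \<in> Ph v h"
    using assms by (simp_all add: x_def facet_point_inner facet_point_strict facet_point_in_Ph del: mem_Ph)
  define F where "F = {y\<in>Ph v h. \<forall>s\<in>{i}. y \<bullet> v s = h $ s}"
  have face: "F face_of Ph v h"
    unfolding F_def by (rule face_of_tight_constraints[OF convex_Ph]) simp
  have xF: "x i \<in> F"
    unfolding F_def using x(1,3) by simp
  have "tight_set v h F = {i}"
  proof
    show "tight_set v h F \<subseteq> {i}"
    proof
      fix j assume "j \<in> tight_set v h F"
      then have "x i \<bullet> v j = h $ j" using xF unfolding tight_set_def by blast
      then show "j \<in> {i}" using x(2)[of i j] by (cases "i = j") auto
    qed
    show "{i} \<subseteq> tight_set v h F"
      unfolding tight_set_def F_def by auto
  qed
  moreover have "F \<noteq> {}" using xF by blast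
  ultimately show ?thesis using face by (intro that)
qed

lemma strictly_irredundant_support_fun:
  assumes "strictly_irredundant v h"
  shows "support_fun (Ph v h) (v i) = h $ i"
proof -
  define x where "x = facet_point v h"
  have x: "\<And>i. x i \<bullet> v i = h $ i" "\<And>i. x i \<in> Ph v h"
    using assms by (simp_all add: x_def facet_point_inner facet_point_strict facet_point_in_Ph del: mem_Ph)
  have "support_fun (Ph v h) (v i) = x i \<bullet> v i"
    by (rule support_fun_eqI[OF x(2)]) (simp add: x(1))
  then show ?thesis using x(1) by simp
qed

lemma strictly_irredundant_rays_inj:
  assumes "strictly_irredundant v h"
  shows "inj (\<lambda>i. poshull {v i})"
proof (rule injI, rule ccontr)
  fix i j assume eq: "poshull {v i} = poshull {v j}" and ij: "i \<noteq> j"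
  define x where "x = facet_point v h"
  have x: "\<And>i. x i \<bullet> v i = h $ i" "\<And>i j. i \<noteq> j \<Longrightarrow> x i \<bullet> v j < h $ j"
    using assms by (simp_all add: x_def facet_point_inner facet_point_strict facet_point_in_Ph del: mem_Ph)
  have "v j \<in> poshull {v i}" using eq poshull_superset by blast
  then obtain c where c: "v j = c *\<^sub>R v i" "0 \<le> c"
    unfolding poshull_singleton by blast
  have "h $ j = c * (x j \<bullet> v i)" using c(1) x(1)[of j] by simp
  also have "\<dots> \<le> c * h $ i" using c(2) x(2)[of j i] ij by (intro mult_left_mono) auto
  also have "\<dots> = x i \<bullet> v j" using c(1) x(1)[of i] by simp
  finally show False using x(2)[of i j] ij by simp
qed

lemma generic_nonzero:
  assumes "generic v h" "strictly_irredundant v h"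
  shows "v i \<noteq> 0"
proof -
  have "\<forall>s\<in>{i}. facet_point v h i \<bullet> v s = h $ s"
    using facet_point_inner[OF assms(2)] by simp
  then have "independent (v ` {i})"
    using assms(1)[unfolded generic_def, rule_format] by blast
  then show ?thesis using dependent_zero[of "{v i}"] by auto
qed

lemma normal_fan_Ph_generic_cone:
  assumes gen: "generic v h" and C: "C \<in> normal_fan (Ph v h)"
  shows "\<exists>T. C = poshull (v ` T) \<and> inj_on v T \<and> independent (v ` T)"
proof -
  obtain F where F: "F face_of Ph v h" "F \<noteq> {}" "C = normal_cone (Ph v h) F"
    using C unfolding normal_fan_def by blast
  obtain x where "x \<in> F" using F(2) by blast
  then have "\<forall>s\<in>tight_set v h F. x \<bullet> v s = h $ s"
    unfolding tight_set_def by blast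
  then have "inj_on v (tight_set v h F) \<and> independent (v ` tight_set v h F)"
    using gen[unfolded generic_def, rule_format] by blast
  then show ?thesis
    using normal_cone_Ph_face[OF gen F(1,2)] F(3) by (intro exI[of _ "tight_set v h F"]) simp
qed

lemma ray_in_normal_fan_Ph:
  assumes si: "strictly_irredundant v h" and gen: "generic v h"
  shows "poshull {v i} \<in> normal_fan (Ph v h)"
proof -
  obtain F where F: "F face_of Ph v h" "F \<noteq> {}" "tight_set v h F = {i}"
    using strictly_irredundant_facet[OF si] by blast
  then have "normal_cone (Ph v h) F = poshull {v i}"
    using normal_cone_Ph_face[OF gen F(1,2)] by simp
  then show ?thesis
    unfolding normal_fan_def using F(1,2) by (intro CollectI exI[of _ F]) simp
qed

lemma simplicial_polytopal_fan_normal_fan_Ph: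
  assumes ps: "positively_spanning v" and si: "strictly_irredundant v h" and gen: "generic v h"
  shows "simplicial_polytopal_fan v (normal_fan (Ph v h))"
proof -
  note cones = normal_fan_Ph_generic_cone[OF gen]
  have "range (\<lambda>i. poshull {v i}) = {C \<in> normal_fan (Ph v h). dim C = 1}"
  proof (intro subset_antisym subsetI)
    fix C assume "C \<in> range (\<lambda>i. poshull {v i})"
    then obtain i where "C = poshull {v i}" by blast
    then show "C \<in> {C \<in> normal_fan (Ph v h). dim C = 1}"
      using ray_in_normal_fan_Ph[OF si gen] generic_nonzero[OF gen si] by (simp add: dim_poshull)
  next
    fix C assume C: "C \<in> {C \<in> normal_fan (Ph v h). dim C = 1}"
    obtain T where T: "C = poshull (v ` T)" "independent (v ` T)"
      using cones[of C] C by blast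
    then have "card (v ` T) = 1"
      using C by (simp add: dim_poshull dim_eq_card_independent)
    then obtain w where w: "v ` T = {w}"
      by (rule card_1_singletonE)
    then obtain i where "w = v i"
      by (metis imageE insertI1)
    then show "C \<in> range (\<lambda>i. poshull {v i})" using T(1) w by auto
  qed
  then have "bij_betw (\<lambda>i. poshull {v i}) UNIV {C \<in> normal_fan (Ph v h). dim C = 1}"
    unfolding bij_betw_def using strictly_irredundant_rays_inj[OF si] by simp
  moreover have "\<exists>Q. polytope Q \<and> normal_fan Q = normal_fan (Ph v h)"
    using polytope_Ph[OF ps] by blast
  ultimately show ?thesis
    unfolding simplicial_polytopal_fan_def using cones by blast
qed

lemma strictly_irredundant_in_deformation_cone:
  assumes ps: "positively_spanning v" and si: "strictly_irredundant v h"
  shows "h \<in> deformation_cone v (normal_fan (Ph v h))"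
proof -
  have "Ph v h \<noteq> {}"
    using facet_point_in_Ph[OF si] by blast
  moreover have "refines (normal_fan (Ph v h)) (normal_fan (Ph v h))"
    unfolding refines_def by blast
  ultimately show ?thesis
    unfolding deformation_cone_def
    using polytope_Ph[OF ps] strictly_irredundant_support_fun[OF si]
    by (intro CollectI exI[of _ "Ph v h"]) auto
qed

lemma finite_simplicial_polytopal_fans:
  fixes v :: "'n::finite \<Rightarrow> 'a::euclidean_space"
  shows "finite {Delta. simplicial_polytopal_fan v Delta}"
proof (rule finite_subset)
  show "{Delta. simplicial_polytopal_fan v Delta} \<subseteq> Pow ((\<lambda>S. poshull (v ` S)) ` UNIV)"
    unfolding simplicial_polytopal_fan_def by blast
qed simp

lemma irredundant_approx_by_deformation_cones:
  fixes v :: "'n::finite \<Rightarrow> 'a::euclidean_space"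
  assumes ps: "positively_spanning v" and irr: "irredundant v h" and e: "0 < e"
  obtains h' Delta where "dist h' h < e" "simplicial_polytopal_fan v Delta"
    "h' \<in> deformation_cone v Delta"
proof -
  define one :: "real^'n" where "one = (\<chi> k. 1)"
  obtain \<delta>0 where \<delta>0: "0 < \<delta>0" "\<And>\<delta>. 0 < \<delta> \<Longrightarrow> \<delta> < \<delta>0 \<Longrightarrow> strictly_irredundant v (h + \<delta> *\<^sub>R one)"
    using irredundant_shift_strictly_irredundant[OF irr] unfolding one_def by blast
  define \<delta> where "\<delta> = min (\<delta>0 / 2) (e / (2 * (norm one + 1)))"
  have n: "0 < norm one + 1" using norm_ge_zero[of one] by linarith
  then have "0 < e / (2 * (norm one + 1))" using e by simp
  then have \<delta>: "0 < \<delta>" "\<delta> < \<delta>0" unfolding \<delta>_def using \<delta>0(1) by auto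
  have "dist (h + \<delta> *\<^sub>R one) h = \<delta> * norm one" using \<delta>(1) by (simp add: dist_norm)
  also have "\<dots> \<le> e / (2 * (norm one + 1)) * norm one"
    unfolding \<delta>_def by (intro mult_right_mono) auto
  also have "\<dots> < e / 2"
  proof -
    have "e * norm one < e * (norm one + 1)" using e by simp
    then show ?thesis using n by (simp add: field_simps)
  qed
  finally have near: "dist (h + \<delta> *\<^sub>R one) h < e / 2" .
  obtain r where r: "0 < r" "\<And>h'. dist h' (h + \<delta> *\<^sub>R one) < r \<Longrightarrow> strictly_irredundant v h'"
    using strictly_irredundant_open[OF \<delta>0(2)[OF \<delta>] irredundant_imp_nonzero[OF irr]] by blast
  have "0 < min r (e / 2)" using r(1) e by simp
  then obtain h' where h': "dist h' (h + \<delta> *\<^sub>R one) < min r (e / 2)" "generic v h'"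
    using generic_dense by blast
  have "dist h' h < e"
    using dist_triangle[of h' h "h + \<delta> *\<^sub>R one"] h'(1) near by simp
  moreover have si: "strictly_irredundant v h'" using r(2) h'(1) by simp
  ultimately show ?thesis
    using that simplicial_polytopal_fan_normal_fan_Ph[OF ps si h'(2)]
      strictly_irredundant_in_deformation_cone[OF ps si] by blast
qed

lemma IRbar_eq_Union_deformation_cones:
  assumes ps: "positively_spanning v"
  shows "IRbar v = \<Union> {deformation_cone v Delta | Delta. simplicial_polytopal_fan v Delta}"
    (is "_ = ?U")
proof
  have "?U = \<Union> (deformation_cone v ` {Delta. simplicial_polytopal_fan v Delta})" by blast
  also have "closed \<dots>"
  proof (rule closed_Union)
    show "finite (deformation_cone v ` {Delta. simplicial_polytopal_fan v Delta})"
      using finite_simplicial_polytopal_fans by (rule finite_imageI)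
    show "\<forall>D\<in>deformation_cone v ` {Delta. simplicial_polytopal_fan v Delta}. closed D"
      using polyhedron_deformation_cone[OF ps] polyhedron_imp_closed by blast
  qed
  finally have "closed ?U" .
  have "h \<in> closure ?U" if irr: "irredundant v h" for h
    unfolding closure_approachable
  proof (intro allI impI)
    fix e :: real assume "0 < e"
    then obtain h' Delta where "dist h' h < e" "simplicial_polytopal_fan v Delta"
        "h' \<in> deformation_cone v Delta"
      using irredundant_approx_by_deformation_cones[OF ps irr] by blast
    then show "\<exists>h'\<in>?U. dist h' h < e" by blast
  qed
  then have "{h. irredundant v h} \<subseteq> ?U"
    using closure_closed[OF \<open>closed ?U\<close>] by auto
  then show "IRbar v \<subseteq> ?U"
    unfolding IRbar_def using \<open>closed ?U\<close> by (rule closure_minimal)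
  show "?U \<subseteq> IRbar v"
    using deformation_cone_subset_IRbar[OF ps] by blast
qed

theorem corollary3p5:
  fixes v :: "'n::finite \<Rightarrow> 'a::euclidean_space"
    and m :: nat and u :: "nat \<Rightarrow> 'a" and y :: "nat \<Rightarrow> real"
  assumes "positively_spanning v"
  shows "finite {Delta. simplicial_polytopal_fan v Delta}
    \<and> IRbar v = \<Union> {deformation_cone v Delta | Delta. simplicial_polytopal_fan v Delta}
    \<and> (\<forall>Delta. simplicial_polytopal_fan v Delta \<longrightarrow>
          polyhedron (deformation_cone v Delta) \<and> cone (deformation_cone v Delta) \<and>
          (\<exists>q. quadratic_fun q \<and> (\<forall>h\<in>deformation_cone v Delta. ls_objective v m u y h = q h)))"
proof (intro conjI allI impI)
  show "finite {Delta. simplicial_polytopal_fan v Delta}"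
    by (rule finite_simplicial_polytopal_fans)
  show "IRbar v = \<Union> {deformation_cone v Delta | Delta. simplicial_polytopal_fan v Delta}"
    by (rule IRbar_eq_Union_deformation_cones[OF assms])
  fix Delta assume Delta: "simplicial_polytopal_fan v Delta"
  show "polyhedron (deformation_cone v Delta)"
    by (rule polyhedron_deformation_cone[OF assms Delta])
  show "cone (deformation_cone v Delta)"
    by (rule cone_deformation_cone[OF assms Delta])
  show "\<exists>q. quadratic_fun q \<and> (\<forall>h\<in>deformation_cone v Delta. ls_objective v m u y h = q h)"
    by (rule ls_objective_quadratic_on_deformation_cone[OF assms Delta])
qed

end
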